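(* Let $p$ be a prime and $f>1$ an integer, and let $l=f$ if $f$ is odd and $l=2f$ if $f$ is even. Define $\boldsymbol{\mu}=(\mu_0(x),\dots,\mu_{f-1}(x))$ by $\mu_0(x)=x-1$, $\mu_1(x)=p-2-x$, and $\mu_j(x)=p-1-x$ for $2\leq j\leq f-1$, and $\boldsymbol{\mu}^{(k)}=g^{k-1}\boldsymbol{\mu}\circ g^{k-2}\boldsymbol{\mu}\circ\cdots\circ g\boldsymbol{\mu}\circ\boldsymbol{\mu}$ for $1\leq k\leq l$. Then the $2l-1$ tuples $\boldsymbol{\mu}^{(1)},\boldsymbol{\mu}^{(2)},\dots,\boldsymbol{\mu}^{(l)},g\boldsymbol{\mu}^{(1)},g\boldsymbol{\mu}^{(2)},\dots,g\boldsymbol{\mu}^{(l-1)}$ are pairwise distinct elements of $(\mathbb{Z}\pm x)^f$.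
   Context: $(\mathbb{Z}\pm x)^f$ denotes the set of $f$-tuples $(\lambda_0(x),\dots,\lambda_{f-1}(x))$ of polynomials of the form $a\pm x$ with $a\in\mathbb{Z}$. Composition is componentwise: $\boldsymbol{\lambda}\circ\boldsymbol{\lambda}'=(\lambda_0(\lambda'_0(x)),\dots,\lambda_{f-1}(\lambda'_{f-1}(x)))$. The cyclic shift $g$ acts by $(g\boldsymbol{\lambda})_j=\lambda_{j+1}$, indices modulo $f$. *)

theory Defs
  imports "HOL-Computational_Algebra.Polynomial"
begin

definition pm_tuples :: "nat \<Rightarrow> int poly list set" where
  "pm_tuples f = {L. length L = f \<and> (\<forall>q\<in>set L. \<exists>a::int. q = [:a, 1:] \<or> q = [:a, -1:])}"

definition tcomp :: "int poly list \<Rightarrow> int poly list \<Rightarrow> int poly list" where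
  "tcomp L M = map2 pcompose L M"

text \<open>Cyclic shift g: (g lambda)_j = lambda_(j+1), indices mod f.\<close>
definition gshift :: "int poly list \<Rightarrow> int poly list" where
  "gshift L = rotate1 L"

definition mu :: "nat \<Rightarrow> nat \<Rightarrow> int poly list" where
  "mu p f = [[:-1, 1:], [:int p - 2, -1:]] @ replicate (f - 2) [:int p - 1, -1:]"

text \<open>mu^(k) = g^(k-1) mu o ... o g mu o mu, for k >= 1 (mu_pow p f 0 is mu^(1)).\<close>
fun mu_pow :: "nat \<Rightarrow> nat \<Rightarrow> nat \<Rightarrow> int poly list" where
  "mu_pow p f 0 = mu p f"
| "mu_pow p f (Suc k) = tcomp ((gshift ^^ Suc k) (mu p f)) (mu_pow p f k)"

definition mu_k :: "nat \<Rightarrow> nat \<Rightarrow> nat \<Rightarrow> int poly list" where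
  "mu_k p f k = mu_pow p f (k - 1)"

end

theory Submission
  imports Defs
begin

text \<open>Evaluated as integer functions, the j-th component of \<mu>^(k) is the composite of the maps
  x - 1, p - 2 - x, p - 1 - x attached to the indices j, j + 1, ..., j + k - 1 read modulo f.
  These composites are bijections, so \<mu>^(k) = \<mu>^(k') with k < k' makes the composite of length
  k' - k starting at index 1 the identity. Closed forms of the composites starting at indices 0, 1
  and 2 over one period l show that this never happens, and comparing components 0 and 1
  separates \<mu>^(k) from g\<mu>^(k').\<close>

definition mu_fun :: "nat \<Rightarrow> nat \<Rightarrow> int \<Rightarrow> int" where
  "mu_fun p i =
    (if i = 0 then (\<lambda>x. x - 1) else if i = 1 then (\<lambda>x. int p - 2 - x) else (\<lambda>x. int p - 1 - x))"

fun mu_comp :: "nat \<Rightarrow> nat \<Rightarrow> nat \<Rightarrow> nat \<Rightarrow> int \<Rightarrow> int" where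
  "mu_comp p f j 0 = id"
| "mu_comp p f j (Suc n) = mu_fun p ((j + n) mod f) \<circ> mu_comp p f j n"

definition mu_period :: "nat \<Rightarrow> nat" where
  "mu_period f = (if odd f then f else 2 * f)"

lemma pcompose_linear: "pcompose [:a, b:] [:c, d:] = [:a + b * c, b * d:]"
  by (simp add: pcompose_pCons)

lemma tcomp_in_pm_tuples:
  assumes "L \<in> pm_tuples f" "M \<in> pm_tuples f"
  shows "tcomp L M \<in> pm_tuples f"
proof -
  have "\<exists>a. q = [:a, 1:] \<or> q = [:a, -1:]" if "q \<in> set (tcomp L M)" for q
  proof -
    from that obtain r s where q: "q = pcompose r s" and r: "r \<in> set L" and s: "s \<in> set M"
      by (auto simp: tcomp_def dest: set_zip_leftD set_zip_rightD)
    then obtain a b where "r = [:a, 1:] \<or> r = [:a, -1:]" "s = [:b, 1:] \<or> s = [:b, -1:]"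
      using assms r s unfolding pm_tuples_def by blast
    then show ?thesis
      unfolding q by (auto simp: pcompose_linear)
  qed
  then show ?thesis
    using assms by (simp add: pm_tuples_def tcomp_def)
qed

lemma rotate_in_pm_tuples: "L \<in> pm_tuples f \<Longrightarrow> rotate n L \<in> pm_tuples f"
  by (simp add: pm_tuples_def)

lemma gshift_funpow: "gshift ^^ n = rotate n"
  by (simp add: rotate_def gshift_def[abs_def])

lemma inj_on_gshift_comp: "inj_on h A \<Longrightarrow> inj_on (\<lambda>x. gshift (h x)) A"
  by (simp add: inj_on_def gshift_def inj_eq[OF inj_rotate1])

lemma mu_in_pm_tuples: "1 < f \<Longrightarrow> mu p f \<in> pm_tuples f"
  by (auto simp: pm_tuples_def mu_def)

lemma mu_pow_in_pm_tuples: "1 < f \<Longrightarrow> mu_pow p f k \<in> pm_tuples f"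
  by (induction k)
    (simp_all add: mu_in_pm_tuples tcomp_in_pm_tuples rotate_in_pm_tuples gshift_funpow
      del: rotate_Suc)

lemma length_mu: "1 < f \<Longrightarrow> length (mu p f) = f"
  using mu_in_pm_tuples by (simp add: pm_tuples_def)

lemma length_mu_pow: "1 < f \<Longrightarrow> length (mu_pow p f k) = f"
  using mu_pow_in_pm_tuples by (simp add: pm_tuples_def)

lemma nth_tcomp:
  "i < length L \<Longrightarrow> i < length M \<Longrightarrow> tcomp L M ! i = pcompose (L ! i) (M ! i)"
  by (simp add: tcomp_def)

lemma poly_nth_mu: "1 < f \<Longrightarrow> i < f \<Longrightarrow> poly (mu p f ! i) = mu_fun p i"
  by (cases i) (auto simp: mu_def mu_fun_def nth_append fun_eq_iff less_Suc_eq_0_disj)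

lemma poly_nth_mu_pow:
  assumes "1 < f" "j < f"
  shows "poly (mu_pow p f k ! j) = mu_comp p f j (Suc k)"
proof (induction k)
  case 0
  show ?case using assms by (simp add: poly_nth_mu)
next
  case (Suc k)
  have "rotate (Suc k) (mu p f) ! j = mu p f ! ((j + Suc k) mod f)"
    using assms by (simp add: nth_rotate length_mu add.commute del: rotate_Suc)
  then have "mu_pow p f (Suc k) ! j = pcompose (mu p f ! ((j + Suc k) mod f)) (mu_pow p f k ! j)"
    using assms by (simp add: nth_tcomp gshift_funpow length_mu length_mu_pow del: rotate_Suc)
  then show ?case
    using Suc assms by (simp add: poly_pcompose[abs_def] poly_nth_mu comp_def)
qed

lemma poly_nth_mu_k:
  "1 < f \<Longrightarrow> 1 \<le> k \<Longrightarrow> j < f \<Longrightarrow> poly (mu_k p f k ! j) = mu_comp p f j k"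
  using poly_nth_mu_pow[of f j p "k - 1"] by (simp add: mu_k_def)

lemma mu_comp_add: "mu_comp p f j (a + b) = mu_comp p f ((j + a) mod f) b \<circ> mu_comp p f j a"
proof (induction b)
  case 0
  show ?case by simp
next
  case (Suc b)
  have "(j + (a + b)) mod f = ((j + a) mod f + b) mod f"
    by (simp add: mod_add_left_eq add.assoc)
  with Suc show ?case by (simp add: comp_assoc)
qed

lemma surj_mu_comp: "surj (mu_comp p f j n)"
proof (induction n)
  case 0
  show ?case by simp
next
  case (Suc n)
  have "surj (mu_fun p ((j + n) mod f))" by (simp add: mu_fun_def)
  with Suc show ?case by (simp only: mu_comp.simps comp_surj)
qed

lemma mu_comp_cancel:
  assumes "mu_comp p f j (k + d) = mu_comp p f j k"
  shows "mu_comp p f ((j + k) mod f) d = id"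
proof -
  let ?g = "mu_comp p f j k"
  have "mu_comp p f ((j + k) mod f) d \<circ> ?g = ?g"
    using assms by (simp add: mu_comp_add)
  then have "mu_comp p f ((j + k) mod f) d \<circ> (?g \<circ> inv ?g) = ?g \<circ> inv ?g"
    by (simp add: o_assoc)
  then show ?thesis
    using surj_mu_comp by (simp add: surj_iff)
qed

lemma ex_shift_mod_eq:
  fixes f :: nat
  assumes "0 < f"
  shows "\<exists>j<f. (j + k) mod f = i mod f"
proof
  let ?j = "((f - 1) * k + i) mod f"
  have "(?j + k) mod f = ((f - 1) * k + i + k) mod f"
    by (simp add: mod_add_left_eq)
  also have "(f - 1) * k + i + k = i + k * f"
    using assms by (cases f) simp_all
  finally show "?j < f \<and> (?j + k) mod f = i mod f"
    using assms by simp
qed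

lemma mu_comp_reflections:
  assumes "2 \<le> j" "j + n \<le> f"
  shows "mu_comp p f j n = (if even n then id else (\<lambda>x. int p - 1 - x))"
  using assms(2)
proof (induction n)
  case 0
  show ?case by simp
next
  case (Suc n)
  then have "(j + n) mod f = j + n" by simp
  with Suc assms(1) show ?case by (auto simp: mu_fun_def fun_eq_iff)
qed

lemma mu_comp_1_low:
  assumes "1 \<le> n" "n < f"
  shows "mu_comp p f 1 n = (if odd n then (\<lambda>x. int p - 2 - x) else (\<lambda>x. x + 1))"
proof (cases "n = 1")
  case True
  with assms show ?thesis by (simp add: mu_fun_def)
next
  case False
  then have "2 mod f = 2" using assms by simp
  then have "mu_comp p f 1 (1 + (n - 1)) = mu_comp p f 2 (n - 1) \<circ> mu_fun p 1"
    using assms mu_comp_add[of p f 1 1 "n - 1"] by (simp add: numeral_2_eq_2)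
  moreover have "mu_comp p f 2 (n - 1) = (if odd n then id else (\<lambda>x. int p - 1 - x))"
    using assms False by (simp add: mu_comp_reflections)
  ultimately show ?thesis
    using assms by (auto simp: mu_fun_def fun_eq_iff)
qed

lemma mu_comp_0_low:
  assumes "2 \<le> n" "n \<le> f"
  shows "mu_comp p f 0 n = (if even n then (\<lambda>x. int p - 1 - x) else id)"
proof -
  have "mu_comp p f 0 (1 + (n - 1)) = mu_comp p f 1 (n - 1) \<circ> mu_fun p 0"
    using assms mu_comp_add[of p f 0 1 "n - 1"] by simp
  then show ?thesis
    using assms mu_comp_1_low[of "n - 1" f p] by (auto simp: mu_fun_def fun_eq_iff)
qed

lemma mu_comp_1_f:
  assumes "1 < f" "even f"
  shows "mu_comp p f 1 f = (\<lambda>x. int p - 3 - x)"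
proof -
  have "mu_comp p f 1 ((f - 1) + 1) = mu_comp p f 0 1 \<circ> mu_comp p f 1 (f - 1)"
    using assms mu_comp_add[of p f 1 "f - 1" 1] by simp
  then show ?thesis
    using assms mu_comp_1_low[of "f - 1" f p] by (auto simp: mu_fun_def fun_eq_iff)
qed

lemma mu_comp_0_Suc_f:
  assumes "1 < f" "even f"
  shows "mu_comp p f 0 (f + 1) = (\<lambda>x. int p - 2 - x)"
  using assms mu_comp_add[of p f 0 f 1] mu_comp_0_low[of f f p] by (auto simp: mu_fun_def)

lemma mu_comp_1_Suc_f:
  assumes "1 < f" "even f"
  shows "mu_comp p f 1 (f + 1) = (\<lambda>x. x + 1)"
  using assms mu_comp_add[of p f 1 f 1] mu_comp_1_f[of f p] by (auto simp: mu_fun_def mod_Suc)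

lemma mu_comp_0_cases:
  assumes "1 < f" "1 \<le> n" "n \<le> mu_period f" "n \<noteq> f + 1"
  shows "mu_comp p f 0 n \<in> {\<lambda>x. x - 1, \<lambda>x. int p - 1 - x, id}"
proof -
  consider "n = 1" | "2 \<le> n" "n \<le> f" | "even f" "f + 2 \<le> n" "n \<le> 2 * f"
    using assms by (fastforce simp: mu_period_def split: if_splits)
  then show ?thesis
  proof cases
    case 1
    then show ?thesis by (simp add: mu_fun_def)
  next
    case 2
    then show ?thesis by (simp add: mu_comp_0_low)
  next
    case 3
    then have "mu_comp p f 0 n = mu_comp p f 0 (n - f) \<circ> mu_comp p f 0 f"
      using mu_comp_add[of p f 0 f "n - f"] by simp
    then show ?thesis
      using 3 assms mu_comp_0_low[of "n - f" f p] mu_comp_0_low[of f f p] by (auto simp: fun_eq_iff)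
  qed
qed

lemma mu_comp_1_cases:
  assumes "1 < f" "1 \<le> n" "n < mu_period f"
  shows "mu_comp p f 1 n \<in> {\<lambda>x. int p - 2 - x, \<lambda>x. x + 1, \<lambda>x. int p - 3 - x}"
proof -
  consider "n < f" | "even f" "n = f" | "even f" "f < n" "n < 2 * f"
    using assms by (fastforce simp: mu_period_def split: if_splits)
  then show ?thesis
  proof cases
    case 1
    then have "mu_comp p f 1 n = (if odd n then (\<lambda>x. int p - 2 - x) else (\<lambda>x. x + 1))"
      using assms by (intro mu_comp_1_low)
    then show ?thesis by simp
  next
    case 2
    then show ?thesis using assms mu_comp_1_f[of f p] by simp
  next
    case 3
    then have "mu_comp p f 1 n = mu_comp p f 1 (n - f) \<circ> mu_comp p f 1 f"
      using assms mu_comp_add[of p f 1 f "n - f"] by (simp add: mod_Suc)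
    then show ?thesis
      using 3 assms mu_comp_1_low[of "n - f" f p] mu_comp_1_f[of f p] by (auto simp: fun_eq_iff)
  qed
qed

lemma mu_comp_2_cases:
  assumes "1 < f" "even f" "1 \<le> n" "n < 2 * f"
  shows "mu_comp p f (2 mod f) n \<in> {\<lambda>x. x - 1, \<lambda>x. int p - 1 - x, id, \<lambda>x. int p - 2 - x}"
proof (cases "f = 2")
  case True
  then show ?thesis
    using assms mu_comp_0_cases[of f n p] mu_comp_0_Suc_f[of f p]
    by (cases "n = 3") (auto simp: mu_period_def)
next
  case False
  with assms have f: "2 mod f = 2" "4 \<le> f" by auto
  consider "n \<le> f - 2" | "f - 2 < n" by linarith
  then show ?thesis
  proof cases
    case 1
    then show ?thesis using f by (simp add: mu_comp_reflections)
  next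
    case 2
    define m where "m = n - (f - 2)"
    have "mu_comp p f 2 ((f - 2) + m) = mu_comp p f ((2 + (f - 2)) mod f) m \<circ> mu_comp p f 2 (f - 2)"
      by (rule mu_comp_add)
    also have "2 + (f - 2) = f"
      using f by simp
    also have "f mod f = 0"
      by simp
    also have "mu_comp p f 2 (f - 2) = id"
      using assms f by (simp add: mu_comp_reflections)
    finally have "mu_comp p f 2 n = mu_comp p f 0 m"
      using 2 by (simp add: m_def)
    moreover have "1 \<le> m" "m \<le> mu_period f"
      using 2 assms by (auto simp: m_def mu_period_def)
    ultimately show ?thesis
      using f assms mu_comp_0_cases[of f m p] mu_comp_0_Suc_f[of f p] by (cases "m = f + 1") auto
  qed
qed

lemma mu_comp_1_ne_id:
  assumes "1 < f" "1 \<le> d" "d < mu_period f"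
  shows "mu_comp p f 1 d \<noteq> id"
  \<comment> \<open>maps \<open>x \<mapsto> c \<plusminus> x\<close> are told apart by their values at 0 and 1\<close>
  using mu_comp_1_cases[OF assms, of p] by (auto dest: arg_cong[where f = "\<lambda>h. (h 0, h 1)"])

lemma mu_k_inj_on:
  assumes "1 < f"
  shows "inj_on (mu_k p f) {1..mu_period f}"
proof (rule linorder_inj_onI')
  fix k k' assume k: "k \<in> {1..mu_period f}" "k' \<in> {1..mu_period f}" "k < k'"
  obtain j where j: "j < f" "(j + k) mod f = 1"
    using ex_shift_mod_eq[of f k 1] assms by auto
  show "mu_k p f k \<noteq> mu_k p f k'"
  proof
    assume "mu_k p f k = mu_k p f k'"
    then have "mu_comp p f j (k + (k' - k)) = mu_comp p f j k"
      using assms j k poly_nth_mu_k[of f k j p] poly_nth_mu_k[of f k' j p] by simp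
    then have "mu_comp p f 1 (k' - k) = id"
      using mu_comp_cancel j by metis
    moreover have "1 \<le> k' - k" "k' - k < mu_period f"
      using k by auto
    ultimately show False
      using mu_comp_1_ne_id[OF assms] by blast
  qed
qed

lemma mu_k_ne_gshift_mu_k:
  assumes f: "1 < f" and k: "1 \<le> k" "k \<le> mu_period f" and k': "1 \<le> k'" "k' < mu_period f"
  shows "mu_k p f k \<noteq> gshift (mu_k p f k')"
proof
  assume eq: "mu_k p f k = gshift (mu_k p f k')"
  have shift: "mu_comp p f j k = mu_comp p f (Suc j mod f) k'" if "j < f" for j
  proof -
    have "mu_k p f k ! j = mu_k p f k' ! (Suc j mod f)"
      using eq that f by (simp add: gshift_def nth_rotate1 mu_k_def length_mu_pow)
    then show ?thesis
      using poly_nth_mu_k[of f k j p] poly_nth_mu_k[of f k' "Suc j mod f" p] f k k' that by simp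
  qed
  \<comment> \<open>component 0 pins down k, then component 1 compares \<open>x + 1\<close> with a composite from index 2\<close>
  have "k = f + 1 \<and> even f"
  proof (rule ccontr)
    assume "\<not> (k = f + 1 \<and> even f)"
    then have "k \<noteq> f + 1"
      using k by (auto simp: mu_period_def)
    then show False
      using shift[of 0] f mu_comp_0_cases[OF f k, of p] mu_comp_1_cases[OF f k', of p]
      by (auto dest: arg_cong[where f = "\<lambda>h. (h 0, h 1)"])
  qed
  then have "mu_comp p f (2 mod f) k' = (\<lambda>x. x + 1)"
    using shift[of 1] f mu_comp_1_Suc_f[of f p] by (simp add: numeral_2_eq_2)
  moreover have "k' < 2 * f"
    using k' \<open>k = f + 1 \<and> even f\<close> by (simp add: mu_period_def)
  ultimately show False
    using mu_comp_2_cases[of f k' p] f k' \<open>k = f + 1 \<and> even f\<close>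
    by (auto dest: arg_cong[where f = "\<lambda>h. (h 0, h 1)"])
qed

theorem lemma2p2:
  fixes p f l :: nat
  assumes "prime p" and "f > 1"
    and "l = (if odd f then f else 2 * f)"
  shows "distinct (map (mu_k p f) [1..<l+1] @ map (\<lambda>k. gshift (mu_k p f k)) [1..<l])
    \<and> set (map (mu_k p f) [1..<l+1] @ map (\<lambda>k. gshift (mu_k p f k)) [1..<l]) \<subseteq> pm_tuples f"
proof -
  have f: "1 < f" and l: "l = mu_period f"
    using assms by (simp_all add: mu_period_def)
  have inj: "inj_on (mu_k p f) {1..<l+1}"
    using mu_k_inj_on[OF f] l by (simp add: atLeastLessThanSuc_atLeastAtMost)
  moreover have "inj_on (\<lambda>k. gshift (mu_k p f k)) {1..<l}"
    using inj by (auto intro: inj_on_gshift_comp inj_on_subset)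
  moreover have "mu_k p f ` {1..<l+1} \<inter> (\<lambda>k. gshift (mu_k p f k)) ` {1..<l} = {}"
    using mu_k_ne_gshift_mu_k[OF f] l by fastforce
  ultimately have "distinct (map (mu_k p f) [1..<l+1] @ map (\<lambda>k. gshift (mu_k p f k)) [1..<l])"
    unfolding distinct_append distinct_map set_map set_upt by simp
  moreover have "mu_k p f k \<in> pm_tuples f" "gshift (mu_k p f k) \<in> pm_tuples f" for k
    using mu_pow_in_pm_tuples[OF f] rotate_in_pm_tuples[of _ f 1] by (simp_all add: mu_k_def gshift_def)
  ultimately show ?thesis
    by auto
qed

end
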